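(* Let $k\ge2$. There exists an integer $m$ and a bipartite construction $B$ on $m$ vertices which contains a $K_k$-factor with at least $\lambda_k m$ red edges as well as a $K_k$-factor with at least $\lambda_k m$ blue edges.
   Context: A $K_k$-factor of $K_n$ ($k\mid n$) is a collection of $n/k$ vertex-disjoint copies of $K_k$ covering all vertices. The bipartite construction with ratio $\rho\in[0,1]$ is the red/blue-coloring of $K_n$ obtained by partitioning $V(K_n)=X\cup Y$ with $|X|=\rho n$, coloring all edges touching $X$ with one color and all edges inside $Y$ with the other; a bipartite construction is one with some ratio $\rho$. For $k\ge2$, $\lambda_k$ is the supremum of all $\lambda$ such that for every $n$ divisible by $k$ and every $\rho\in[0,1]$, the $n$-vertex bipartite construction with ratio $\rho$ has a $K_k$-factor with at least $\lambda n$ edges of the same color. *)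

theory Defs
  imports Complex_Main "HOL-Library.Disjoint_Sets"
begin

datatype colour = Red | Blue

definition other_colour :: "colour \<Rightarrow> colour" where
  "other_colour c = (if c = Red then Blue else Red)"

text \<open>Vertices of K_n are 0,...,n-1; an edge is a 2-element subset.
  The bipartite construction with parameters (x, c): X = {0..<x} (so the ratio is x/n),
  every edge touching X gets colour c, every edge inside Y = {x..<n} gets the other colour.\<close>

definition bip_colour :: "nat \<Rightarrow> colour \<Rightarrow> nat set \<Rightarrow> colour" where
  "bip_colour x c e = (if (\<exists>v\<in>e. v < x) then c else other_colour c)"

text \<open>A K_k-factor of K_n: a partition of the vertex set into parts of size k
  (each part spans a copy of K_k).\<close>

definition Kk_factor :: "nat \<Rightarrow> nat \<Rightarrow> nat set set \<Rightarrow> bool" where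
  "Kk_factor k n F \<longleftrightarrow> partition_on {0..<n} F \<and> (\<forall>P\<in>F. card P = k)"

definition factor_edges :: "nat set set \<Rightarrow> nat set set" where
  "factor_edges F = {e. \<exists>P\<in>F. e \<subseteq> P \<and> card e = 2}"

definition colour_count :: "nat \<Rightarrow> colour \<Rightarrow> nat set set \<Rightarrow> colour \<Rightarrow> nat" where
  "colour_count x c F d = card {e \<in> factor_edges F. bip_colour x c e = d}"

definition lambda_k :: "nat \<Rightarrow> real" where
  "lambda_k k = Sup {lam. \<forall>n x c. k dvd n \<longrightarrow> x \<le> n \<longrightarrow>
      (\<exists>F d. Kk_factor k n F \<and> real (colour_count x c F d) \<ge> lam * real n)}"

end

(* A part of a K_k-factor meeting Y = {x..<n} in j vertices carries C(j,2) edges of the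
   colour of Y and C(k,2) - C(j,2) edges of the colour of X. Since C(j,2) <= (k-1) j / 2 for
   j <= k, every factor has at most (k-1)|Y|/2 edges of the first kind, with equality when Y
   is a union of parts. Since C(j,2) >= C(b,2) + (b-1)(j-b) for all integers j, with equality
   for j = b-1 and j = b, a factor with q parts has at most q (C(k,2) + C(b,2)) - (b-1)|Y|
   edges of the second kind, with equality when every part meets Y in b-1 or b vertices.
   For the least b with 2 (C(k,2) + C(b,2)) <= (k+2b-3) b, the choice q = (k+2b-3) k and
   |Y| = 2 (C(k,2) + C(b,2)) k makes both equality cases realisable and both bounds equal,
   so the best red and the best blue factor have the same size V, and V >= lambda_k m by
   the definition of lambda_k as a supremum. *)

theory Submission
  imports Defs
begin

lemma partition_on_sum_card_Diff:
  assumes "finite A" "partition_on A F"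
  shows "(\<Sum>P\<in>F. card (P - Y)) = card (A - Y)"
proof -
  have "card (\<Union>P\<in>F. P - Y) = (\<Sum>P\<in>F. card (P - Y))"
  proof (rule card_UN_disjoint)
    show "finite F" using finite_elements assms .
    show "\<forall>P\<in>F. finite (P - Y)"
      using assms partition_onD1 by (metis Diff_subset Union_upper finite_subset)
    show "\<forall>P\<in>F. \<forall>Q\<in>F. P \<noteq> Q \<longrightarrow> (P - Y) \<inter> (Q - Y) = {}"
      using partition_onD2[OF assms(2)] by (auto simp: disjoint_def)
  qed
  moreover have "(\<Union>P\<in>F. P - Y) = A - Y"
    using partition_onD1[OF assms(2)] by auto
  ultimately show ?thesis by simp
qed

lemma Kk_factor_finite:
  assumes "Kk_factor k n F"
  shows "finite F" and "P \<in> F \<Longrightarrow> finite P"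
  using assms finite_elements[of "{0..<n}" F] partition_onD1[of "{0..<n}" F]
  by (auto simp: Kk_factor_def intro: finite_subset[of P "{0..<n}"])

lemma Kk_factor_card:
  assumes "Kk_factor k n F"
  shows "card F * k = n"
  using partition_on_sum_card_Diff[of "{0..<n}" F "{}"] assms by (simp add: Kk_factor_def)

lemma Kk_factor_sum_card_Diff:
  assumes "Kk_factor k n F"
  shows "(\<Sum>P\<in>F. card (P - {0..<x})) = n - x"
  using partition_on_sum_card_Diff[of "{0..<n}" F "{0..<x}"] assms by (simp add: Kk_factor_def)

lemma Kk_factor_card_Diff_le:
  assumes "Kk_factor k n F" "P \<in> F"
  shows "card (P - A) \<le> k"
  using assms Kk_factor_finite(2)[OF assms] card_mono[of P "P - A"] by (auto simp: Kk_factor_def)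

lemma colour_count_eq_sum_parts:
  assumes "Kk_factor k n F"
  shows "colour_count x c F d = (\<Sum>P\<in>F. card {e. e \<subseteq> P \<and> card e = 2 \<and> bip_colour x c e = d})"
proof -
  have disj: "P \<inter> Q = {}" if "P \<in> F" "Q \<in> F" "P \<noteq> Q" for P Q
    using assms that unfolding Kk_factor_def by (meson disjointD partition_onD2)
  have "{e \<in> factor_edges F. bip_colour x c e = d} =
      (\<Union>P\<in>F. {e. e \<subseteq> P \<and> card e = 2 \<and> bip_colour x c e = d})"
    by (auto simp: factor_edges_def)
  moreover have "card \<dots> = (\<Sum>P\<in>F. card {e. e \<subseteq> P \<and> card e = 2 \<and> bip_colour x c e = d})"
  proof (rule card_UN_disjoint)
    show "finite F" using Kk_factor_finite(1)[OF assms] .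
    show "\<forall>P\<in>F. finite {e. e \<subseteq> P \<and> card e = 2 \<and> bip_colour x c e = d}"
      using Kk_factor_finite(2)[OF assms] by (auto intro: finite_subset[of _ "Pow _"])
    show "\<forall>P\<in>F. \<forall>Q\<in>F. P \<noteq> Q \<longrightarrow> {e. e \<subseteq> P \<and> card e = 2 \<and> bip_colour x c e = d} \<inter>
        {e. e \<subseteq> Q \<and> card e = 2 \<and> bip_colour x c e = d} = {}"
    proof (intro ballI impI)
      fix P Q assume "P \<in> F" "Q \<in> F" "P \<noteq> Q"
      then have "P \<inter> Q = {}" by (rule disj)
      show "{e. e \<subseteq> P \<and> card e = 2 \<and> bip_colour x c e = d} \<inter>
        {e. e \<subseteq> Q \<and> card e = 2 \<and> bip_colour x c e = d} = {}"
      proof (rule equals0I)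
        fix e assume "e \<in> {e. e \<subseteq> P \<and> card e = 2 \<and> bip_colour x c e = d} \<inter>
          {e. e \<subseteq> Q \<and> card e = 2 \<and> bip_colour x c e = d}"
        then have "e \<subseteq> P \<inter> Q" "card e = 2" by auto
        with \<open>P \<inter> Q = {}\<close> show False by simp
      qed
    qed
  qed
  ultimately show ?thesis by (simp add: colour_count_def)
qed

lemma card_edges_other_colour:
  assumes "finite P"
  shows "card {e. e \<subseteq> P \<and> card e = 2 \<and> bip_colour x c e = other_colour c} =
    card (P - {0..<x}) choose 2"
proof -
  have "{e. e \<subseteq> P \<and> card e = 2 \<and> bip_colour x c e = other_colour c} =
      {e. e \<subseteq> P - {0..<x} \<and> card e = 2}"
    by (cases c) (auto simp: bip_colour_def other_colour_def)
  then show ?thesis using n_subsets[of "P - {0..<x}" 2] assms by simp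
qed

lemma card_edges_colour:
  assumes "finite P"
  shows "card {e. e \<subseteq> P \<and> card e = 2 \<and> bip_colour x c e = c} =
    (card P choose 2) - (card (P - {0..<x}) choose 2)"
proof -
  let ?E = "\<lambda>Q. {e. e \<subseteq> Q \<and> card e = 2}"
  have "{e. e \<subseteq> P \<and> card e = 2 \<and> bip_colour x c e = c} = ?E P - ?E (P - {0..<x})"
    by (cases c) (auto simp: bip_colour_def other_colour_def)
  moreover have "finite (?E P)" using assms by (auto intro: finite_subset[of _ "Pow P"])
  moreover have "?E (P - {0..<x}) \<subseteq> ?E P" by auto
  ultimately show ?thesis
    using assms by (simp add: card_Diff_subset n_subsets finite_subset)
qed

lemma colour_count_other_colour:
  assumes "Kk_factor k n F"
  shows "colour_count x c F (other_colour c) = (\<Sum>P\<in>F. card (P - {0..<x}) choose 2)"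
  using colour_count_eq_sum_parts[OF assms] card_edges_other_colour Kk_factor_finite(2)[OF assms]
  by simp

lemma colour_count_colour:
  assumes "Kk_factor k n F"
  shows "colour_count x c F c = (\<Sum>P\<in>F. (k choose 2) - (card (P - {0..<x}) choose 2))"
  using colour_count_eq_sum_parts[OF assms] card_edges_colour Kk_factor_finite(2)[OF assms] assms
  by (simp add: Kk_factor_def)

lemma colour_count_colour_add:
  assumes "Kk_factor k n F"
  shows "colour_count x c F c + (b - 1) * (n - x) =
    (\<Sum>P\<in>F. (k choose 2) - (card (P - {0..<x}) choose 2) + (b - 1) * card (P - {0..<x}))"
  by (simp add: colour_count_colour[OF assms] sum.distrib sum_distrib_left
      Kk_factor_sum_card_Diff[OF assms, symmetric])

lemma two_mult_choose_two: "2 * (n choose 2) = n * (n - 1)"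
  by (cases n) (simp_all add: choose_two)

lemma two_mult_choose_two_int: "2 * int (n choose 2) = int n * (int n - 1)"
proof -
  have "int (2 * (n choose 2)) = int (n * (n - 1))" by (simp only: two_mult_choose_two)
  then show ?thesis by (cases n) (simp_all add: algebra_simps)
qed

lemma two_mult_choose_two_le:
  assumes "j \<le> k"
  shows "2 * (j choose 2) \<le> (k - 1) * j"
  using assms by (simp add: two_mult_choose_two mult.commute[of _ j] mult_le_mono2 diff_le_mono)

lemma choose_two_tangent: "(b - 1) * j \<le> (j choose 2) + (b choose 2)"
proof (cases "b = 0")
  case False
  have "0 \<le> (int j - int b) * (int j - int b + 1)"
    by (cases "int j < int b") (auto intro: mult_nonpos_nonpos)
  then have "2 * ((int b - 1) * int j) \<le> 2 * (int (j choose 2) + int (b choose 2))"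
    unfolding distrib_left two_mult_choose_two_int by (simp add: algebra_simps)
  then have "int ((b - 1) * j) \<le> int ((j choose 2) + (b choose 2))"
    using False by simp
  then show ?thesis by (simp only: of_nat_le_iff)
qed simp

lemma choose_two_tangent_eq:
  assumes "j = b - 1 \<or> j = b"
  shows "(b - 1) * j = (j choose 2) + (b choose 2)"
proof (cases "b = 0")
  case False
  have "2 * ((int b - 1) * int j) = 2 * (int (j choose 2) + int (b choose 2))"
    using assms False unfolding distrib_left two_mult_choose_two_int by (auto simp: algebra_simps)
  then have "int ((b - 1) * j) = int ((j choose 2) + (b choose 2))"
    using False by simp
  then show ?thesis by (simp only: of_nat_eq_iff)
qed (use assms in simp)

lemma colour_count_other_colour_le:
  assumes "Kk_factor k n F"
  shows "2 * colour_count x c F (other_colour c) \<le> (k - 1) * (n - x)"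
proof -
  have "2 * colour_count x c F (other_colour c) = (\<Sum>P\<in>F. 2 * (card (P - {0..<x}) choose 2))"
    by (simp add: colour_count_other_colour[OF assms] sum_distrib_left)
  also have "\<dots> \<le> (\<Sum>P\<in>F. (k - 1) * card (P - {0..<x}))"
  proof (rule sum_mono)
    fix P assume "P \<in> F"
    then have "card (P - {0..<x}) \<le> k" by (rule Kk_factor_card_Diff_le[OF assms])
    then show "2 * (card (P - {0..<x}) choose 2) \<le> (k - 1) * card (P - {0..<x})"
      by (rule two_mult_choose_two_le)
  qed
  also have "\<dots> = (k - 1) * (n - x)"
    by (simp add: sum_distrib_left[symmetric] Kk_factor_sum_card_Diff[OF assms])
  finally show ?thesis .
qed

lemma colour_count_colour_le:
  assumes "Kk_factor k n F"
  shows "colour_count x c F c + (b - 1) * (n - x) \<le> card F * ((k choose 2) + (b choose 2))"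
proof -
  have "colour_count x c F c + (b - 1) * (n - x) =
      (\<Sum>P\<in>F. (k choose 2) - (card (P - {0..<x}) choose 2) + (b - 1) * card (P - {0..<x}))"
    by (rule colour_count_colour_add[OF assms])
  also have "\<dots> \<le> (\<Sum>P\<in>F. (k choose 2) + (b choose 2))"
  proof (rule sum_mono)
    fix P assume "P \<in> F"
    then have "card (P - {0..<x}) \<le> k" by (rule Kk_factor_card_Diff_le[OF assms])
    then have "card (P - {0..<x}) choose 2 \<le> k choose 2" by (rule binomial_right_mono)
    then show "(k choose 2) - (card (P - {0..<x}) choose 2) + (b - 1) * card (P - {0..<x})
        \<le> (k choose 2) + (b choose 2)"
      using choose_two_tangent[of b "card (P - {0..<x})"] by linarith
  qed
  finally show ?thesis by simp
qed

lemma disjoint_family_prefix_sum_intervals: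
  fixes s :: "nat \<Rightarrow> nat"
  shows "disjoint_family (\<lambda>j. {a + (\<Sum>i<j. s i)..<a + (\<Sum>i<Suc j. s i)})"
proof -
  have "{a + (\<Sum>l<i. s l)..<a + (\<Sum>l<Suc i. s l)} \<inter> {a + (\<Sum>l<j. s l)..<a + (\<Sum>l<Suc j. s l)} = {}"
    if "i < j" for i j
  proof -
    have "(\<Sum>l<Suc i. s l) \<le> (\<Sum>l<j. s l)"
      using that by (intro sum_mono2) auto
    then show ?thesis by auto
  qed
  then show ?thesis
    unfolding disjoint_family_on_def by (metis Int_commute linorder_neqE_nat)
qed

lemma UN_prefix_sum_intervals:
  fixes s :: "nat \<Rightarrow> nat"
  shows "(\<Union>j<q. {a + (\<Sum>i<j. s i)..<a + (\<Sum>i<Suc j. s i)}) = {a..<a + (\<Sum>i<q. s i)}"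
  by (induction q) (auto simp: lessThan_Suc)

lemma Kk_factor_of_disjoint_family:
  assumes "0 < k" and "disjoint_family_on P I" and "(\<Union>i\<in>I. P i) = {0..<n}"
    and "\<And>i. i \<in> I \<Longrightarrow> card (P i) = k"
  shows "Kk_factor k n (P ` I)" and "inj_on P I"
proof -
  have nonempty: "P i \<noteq> {}" if "i \<in> I" for i
    using assms(1,4) that by fastforce
  then have "disjoint (P ` I)" "inj_on P I"
    using disjoint_family_on_iff_disjoint_image assms(2) by blast+
  moreover have "{} \<notin> P ` I"
    using nonempty by force
  ultimately show "Kk_factor k n (P ` I)" "inj_on P I"
    using assms(3,4) by (auto simp: Kk_factor_def partition_on_def)
qed

lemma Kk_factor_profile_exists:
  assumes "0 < k" and t_le: "\<forall>j<q. t j \<le> k"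
    and sum_t: "(\<Sum>j<q. t j) = q * k - x" and "x \<le> q * k"
  shows "\<exists>F. Kk_factor k (q * k) F \<and>
    (\<forall>g :: nat \<Rightarrow> nat. (\<Sum>P\<in>F. g (card (P - {0..<x}))) = (\<Sum>j<q. g (t j)))"
proof -
  define s where "s j = k - t j" for j
  define I where "I a u j = {a + (\<Sum>i<j. u i)..<a + (\<Sum>i<Suc j. u i)}" for a and u :: "nat \<Rightarrow> nat" and j
  define P where "P j = I 0 s j \<union> I x t j" for j
  have "(\<Sum>j<q. s j) = (\<Sum>j<q. k) - (\<Sum>j<q. t j)"
    unfolding s_def using t_le by (intro sum_subtractf_nat) simp
  then have sum_s: "(\<Sum>j<q. s j) = x"
    using sum_t \<open>x \<le> q * k\<close> by simp
  have UN_I: "(\<Union>j<q. I a u j) = {a..<a + (\<Sum>i<q. u i)}" for a u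
    unfolding I_def by (rule UN_prefix_sum_intervals)
  have low: "I 0 s j \<subseteq> {0..<x}" if "j < q" for j
    using UN_I[of 0 s] sum_s that by auto
  have high: "I x t j \<inter> {0..<x} = {}" for j
    by (auto simp: I_def)
  have outside: "P j - {0..<x} = I x t j" if "j < q" for j
    using low[OF that] high[of j] by (auto simp: P_def)
  have card_P: "card (P j) = k" if "j < q" for j
  proof -
    have "card (P j) = card (I 0 s j) + card (I x t j)"
      unfolding P_def using low[OF that] high[of j] by (intro card_Un_disjoint) (auto simp: I_def)
    then show ?thesis using t_le that by (simp add: I_def s_def)
  qed
  have "disjoint_family_on P {..<q}"
    using disjoint_family_prefix_sum_intervals[of 0 s] disjoint_family_prefix_sum_intervals[of x t]
      low high unfolding disjoint_family_on_def P_def I_def by blast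
  moreover have "(\<Union>j<q. P j) = {0..<q * k}"
  proof -
    have "(\<Union>j<q. P j) = (\<Union>j<q. I 0 s j) \<union> (\<Union>j<q. I x t j)"
      by (auto simp: P_def)
    also have "\<dots> = {0..<x} \<union> {x..<q * k}"
      using UN_I[of 0 s] UN_I[of x t] sum_s sum_t \<open>x \<le> q * k\<close> by simp
    finally show ?thesis using \<open>x \<le> q * k\<close> by auto
  qed
  ultimately have "Kk_factor k (q * k) (P ` {..<q})" and inj: "inj_on P {..<q}"
    using Kk_factor_of_disjoint_family[OF \<open>0 < k\<close>, of P "{..<q}"] card_P by simp_all
  moreover have "(\<Sum>Q\<in>P ` {..<q}. g (card (Q - {0..<x}))) = (\<Sum>j<q. g (t j))" for g :: "nat \<Rightarrow> nat"
    unfolding sum.reindex[OF inj] using outside by (intro sum.cong) (auto simp: I_def)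
  ultimately show ?thesis by blast
qed

lemma sum_lessThan_if_less:
  fixes u v :: "'a :: comm_semiring_1"
  assumes "r \<le> q"
  shows "(\<Sum>j<q. if j < r then u else v) = of_nat r * u + of_nat (q - r) * v"
  using assms
proof (induction q)
  case (Suc q)
  show ?case
  proof (cases "r \<le> q")
    case True
    then show ?thesis using Suc by (simp add: Suc_diff_le algebra_simps)
  next
    case False
    then have "r = Suc q" using Suc.prems by simp
    then show ?thesis by simp
  qed
qed simp

lemma Kk_factor_two_levels_exists:
  assumes "0 < k" "1 \<le> b" "b \<le> k" "q * (b - 1) \<le> y" "y \<le> q * b"
  obtains F where "Kk_factor k (q * k) F"
    and "colour_count (q * k - y) c F c + (b - 1) * y = q * ((k choose 2) + (b choose 2))"
proof -
  define r where "r = q * b - y"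
  define t where "t j = (if j < r then b - 1 else b)" for j
  have "q * b \<le> q * (b - 1) + q"
    using \<open>1 \<le> b\<close> by (simp add: algebra_simps flip: mult_Suc_right)
  then have "r \<le> q" using assms(4) by (simp add: r_def)
  have "int (\<Sum>j<q. t j) = int r * (int b - 1) + (int q - int r) * int b"
    unfolding t_def sum_lessThan_if_less[OF \<open>r \<le> q\<close>] using \<open>r \<le> q\<close> \<open>1 \<le> b\<close> by simp
  also have "\<dots> = int y"
    using \<open>y \<le> q * b\<close> by (simp add: r_def algebra_simps)
  finally have sum_t: "(\<Sum>j<q. t j) = y" by (simp only: of_nat_eq_iff)
  have "y \<le> q * k" using assms(3,5) by (meson le_trans mult_le_mono2)
  have "t j \<le> b" for j by (simp add: t_def)
  then have "\<forall>j<q. t j \<le> k" using assms(3) le_trans by blast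
  moreover have "(\<Sum>j<q. t j) = q * k - (q * k - y)" using sum_t \<open>y \<le> q * k\<close> by simp
  ultimately obtain F where F: "Kk_factor k (q * k) F"
    and profile: "\<forall>g :: nat \<Rightarrow> nat. (\<Sum>P\<in>F. g (card (P - {0..<q * k - y}))) = (\<Sum>j<q. g (t j))"
    using Kk_factor_profile_exists[OF \<open>0 < k\<close>] diff_le_self by blast
  have part: "(k choose 2) - (t j choose 2) + (b - 1) * t j = (k choose 2) + (b choose 2)" for j
    using binomial_right_mono[of "t j" k 2] choose_two_tangent_eq[of "t j" b] \<open>t j \<le> b\<close> \<open>b \<le> k\<close>
    by (simp add: t_def)
  have "colour_count (q * k - y) c F c + (b - 1) * y =
      (\<Sum>P\<in>F. (k choose 2) - (card (P - {0..<q * k - y}) choose 2)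
        + (b - 1) * card (P - {0..<q * k - y}))"
    using colour_count_colour_add[OF F, of "q * k - y" c b] \<open>y \<le> q * k\<close> by simp
  also have "\<dots> = (\<Sum>j<q. (k choose 2) - (t j choose 2) + (b - 1) * t j)"
    using profile[rule_format, of "\<lambda>j. (k choose 2) - (j choose 2) + (b - 1) * j"] .
  finally show ?thesis using that F part by simp
qed

lemma Kk_factor_full_parts_exists:
  assumes "0 < k" "e \<le> q"
  obtains F where "Kk_factor k (q * k) F"
    and "2 * colour_count (q * k - e * k) c F (other_colour c) = (k - 1) * (e * k)"
proof -
  define t where "t j = (if j < e then k else 0)" for j
  have "\<forall>j<q. t j \<le> k" by (simp add: t_def)
  moreover have "e * k \<le> q * k" using assms(2) by simp
  moreover have "(\<Sum>j<q. t j) = q * k - (q * k - e * k)"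
    unfolding t_def sum_lessThan_if_less[OF \<open>e \<le> q\<close>] using calculation by simp
  ultimately obtain F where F: "Kk_factor k (q * k) F"
    and profile: "\<forall>g :: nat \<Rightarrow> nat. (\<Sum>P\<in>F. g (card (P - {0..<q * k - e * k}))) = (\<Sum>j<q. g (t j))"
    using Kk_factor_profile_exists[OF \<open>0 < k\<close>] diff_le_self by blast
  have "2 * colour_count (q * k - e * k) c F (other_colour c) = 2 * (\<Sum>j<q. t j choose 2)"
    using colour_count_other_colour[OF F] profile[rule_format, of "\<lambda>j. j choose 2"] by simp
  also have "\<dots> = 2 * (\<Sum>j<q. if j < e then k choose 2 else 0)"
    by (intro arg_cong[where f = "(*) 2"] sum.cong) (simp_all add: t_def)
  also have "\<dots> = e * (2 * (k choose 2))"
    unfolding sum_lessThan_if_less[OF \<open>e \<le> q\<close>] by simp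
  also have "\<dots> = (k - 1) * (e * k)"
    by (simp add: two_mult_choose_two)
  finally show ?thesis using that F by blast
qed

lemma Kk_factor_exists:
  assumes "0 < k" "k dvd n"
  obtains F where "Kk_factor k n F"
proof -
  obtain q where "n = q * k" using assms(2) by (metis dvd_def mult.commute)
  moreover have "\<exists>F. Kk_factor k (q * k) F"
    using Kk_factor_profile_exists[OF \<open>0 < k\<close>, of q "\<lambda>_. k" 0] by simp blast
  ultimately show ?thesis using that by blast
qed

lemma lambda_k_mult_le:
  assumes "0 < k" "k dvd n" "0 < n" "x \<le> n"
    and bound: "\<And>F d. Kk_factor k n F \<Longrightarrow> colour_count x c F d \<le> V"
  shows "lambda_k k * real n \<le> real V"
proof -
  let ?L = "{lam. \<forall>n x c. k dvd n \<longrightarrow> x \<le> n \<longrightarrow>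
      (\<exists>F d. Kk_factor k n F \<and> real (colour_count x c F d) \<ge> lam * real n)}"
  have "0 \<in> ?L"
  proof (intro CollectI allI impI)
    fix n' x' c' assume "k dvd n'"
    then obtain F where "Kk_factor k n' F" using Kk_factor_exists[OF \<open>0 < k\<close>] by blast
    then show "\<exists>F d. Kk_factor k n' F \<and> real (colour_count x' c' F d) \<ge> 0 * real n'" by auto
  qed
  moreover have "lam \<le> real V / real n" if lam: "lam \<in> ?L" for lam
  proof -
    obtain F d where "Kk_factor k n F" "lam * real n \<le> real (colour_count x c F d)"
      using lam assms(2,4) by blast
    then have "lam * real n \<le> real V" using bound by (meson of_nat_le_iff order_trans)
    then show ?thesis using \<open>0 < n\<close> by (simp add: pos_le_divide_eq)
  qed
  ultimately have "Sup ?L \<le> real V / real n"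
    by (intro cSup_least) blast+
  then have "lambda_k k \<le> real V / real n"
    unfolding lambda_k_def .
  then show ?thesis using \<open>0 < n\<close> by (simp add: pos_le_divide_eq)
qed

lemma tangent_level_exists:
  assumes "2 \<le> k"
  obtains b where "1 \<le> b" "b \<le> k"
    "(k - 1 + 2 * (b - 1)) * (b - 1) \<le> 2 * ((k choose 2) + (b choose 2))"
    "2 * ((k choose 2) + (b choose 2)) \<le> (k - 1 + 2 * (b - 1)) * b"
proof -
  define D where "D b = k - 1 + 2 * (b - 1)" for b
  define W where "W b = 2 * ((k choose 2) + (b choose 2))" for b
  define b where "b = (LEAST b. W b \<le> D b * b)"
  have "W k = 2 * (k * (k - 1))"
    unfolding W_def two_mult_choose_two[symmetric] by simp
  moreover have "D k * k = 3 * (k * (k - 1))"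
    using assms by (simp add: D_def algebra_simps)
  ultimately have "W k \<le> D k * k" by linarith
  then have hi: "W b \<le> D b * b" and "b \<le> k"
    unfolding b_def by (rule LeastI, rule Least_le)
  have "0 < W 0" using assms by (simp add: W_def)
  then obtain c where c: "b = Suc c" using hi by (cases b) auto
  have lo: "D b * (b - 1) \<le> W b"
  proof (cases "c = 0")
    case False
    have "\<not> W c \<le> D c * c" using not_less_Least[of c "\<lambda>b. W b \<le> D b * b"] c b_def by auto
    moreover have "D b = D c + 2" using False c by (simp add: D_def)
    moreover have "W b = W c + 2 * c" using c by (simp add: W_def numeral_2_eq_2)
    ultimately show ?thesis using c by (simp add: algebra_simps)
  qed (simp add: c)
  show ?thesis using that[of b] c \<open>b \<le> k\<close> lo hi by (simp add: D_def W_def)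
qed

lemma balanced_parameters_exist:
  assumes "2 \<le> k"
  obtains b q y where "1 \<le> b" "b \<le> k" "0 < q" "q * (b - 1) \<le> y" "y \<le> q * b" "k dvd y"
    "2 * q * ((k choose 2) + (b choose 2)) = (k - 1 + 2 * (b - 1)) * y"
  \<comment> \<open>the last equation says that the red bound q C - (b-1) y equals the blue bound (k-1) y / 2\<close>
proof -
  obtain b where "1 \<le> b" "b \<le> k"
    and lo: "(k - 1 + 2 * (b - 1)) * (b - 1) \<le> 2 * ((k choose 2) + (b choose 2))"
    and hi: "2 * ((k choose 2) + (b choose 2)) \<le> (k - 1 + 2 * (b - 1)) * b"
    using tangent_level_exists[OF assms] by blast
  define D where "D = k - 1 + 2 * (b - 1)"
  define C where "C = (k choose 2) + (b choose 2)"
  have "D * k * (b - 1) \<le> 2 * C * k" "2 * C * k \<le> D * k * b"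
    using mult_le_mono1[OF lo, of k] mult_le_mono1[OF hi, of k]
    by (simp_all add: C_def D_def ac_simps)
  moreover have "0 < D * k" using assms by (simp add: D_def)
  ultimately show ?thesis
    using that[of b "D * k" "2 * C * k"] \<open>1 \<le> b\<close> \<open>b \<le> k\<close> by (simp add: C_def D_def ac_simps)
qed

lemma colour_eq_or_other_colour: "d = c \<or> d = other_colour c"
  by (cases c; cases d) (simp_all add: other_colour_def)

lemma equal_colour_maxima:
  assumes "0 < k" "1 \<le> b" "b \<le> k" "q * (b - 1) \<le> y" "y \<le> q * b" "k dvd y"
    and balance: "2 * q * ((k choose 2) + (b choose 2)) = (k - 1 + 2 * (b - 1)) * y"
  obtains FR FB where "Kk_factor k (q * k) FR" "Kk_factor k (q * k) FB"
    "colour_count (q * k - y) c FR c = colour_count (q * k - y) c FB (other_colour c)"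
    "\<And>F d. Kk_factor k (q * k) F \<Longrightarrow>
      colour_count (q * k - y) c F d \<le> colour_count (q * k - y) c FB (other_colour c)"
proof -
  let ?x = "q * k - y" and ?C = "(k choose 2) + (b choose 2)"
  obtain FR where FR: "Kk_factor k (q * k) FR" and red: "colour_count ?x c FR c + (b - 1) * y = q * ?C"
    using Kk_factor_two_levels_exists[OF assms(1-5)] by blast
  obtain e where "y = e * k" using \<open>k dvd y\<close> by (metis dvd_def mult.commute)
  moreover have "y \<le> q * k" using assms(3,5) by (meson le_trans mult_le_mono2)
  ultimately have "e \<le> q" using \<open>0 < k\<close> by simp
  then obtain FB where FB: "Kk_factor k (q * k) FB"
    and blue: "2 * colour_count ?x c FB (other_colour c) = (k - 1) * y"
    using Kk_factor_full_parts_exists[OF \<open>0 < k\<close>] \<open>y = e * k\<close> by metis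
  have "2 * colour_count ?x c FR c + 2 * (b - 1) * y = (k - 1 + 2 * (b - 1)) * y"
    using red balance by (simp add: algebra_simps)
  then have red_eq_blue: "colour_count ?x c FR c = colour_count ?x c FB (other_colour c)"
    using blue by (simp add: add_mult_distrib)
  have "colour_count ?x c F d \<le> colour_count ?x c FB (other_colour c)" if F: "Kk_factor k (q * k) F" for F d
  proof (cases "d = c")
    case True
    have "card F = q" using Kk_factor_card[OF F] \<open>0 < k\<close> by simp
    then show ?thesis
      using colour_count_colour_le[OF F, of ?x c b] red red_eq_blue True \<open>y \<le> q * k\<close> by simp
  next
    case False
    then show ?thesis
      using colour_count_other_colour_le[OF F, of ?x c] blue \<open>y \<le> q * k\<close> colour_eq_or_other_colour[of d c]
      by auto
  qed
  then show ?thesis using that FR FB red_eq_blue by blast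
qed

theorem lemma3p5:
  fixes k :: nat
  assumes "k \<ge> 2"
  shows "\<exists>m x c. 0 < m \<and> x \<le> m \<and>
    (\<exists>F. Kk_factor k m F \<and> real (colour_count x c F Red) \<ge> lambda_k k * real m) \<and>
    (\<exists>F. Kk_factor k m F \<and> real (colour_count x c F Blue) \<ge> lambda_k k * real m)"
proof -
  have "0 < k" using assms by simp
  obtain b q y where b: "1 \<le> b" "b \<le> k" and "0 < q" and y: "q * (b - 1) \<le> y" "y \<le> q * b" "k dvd y"
    and balance: "2 * q * ((k choose 2) + (b choose 2)) = (k - 1 + 2 * (b - 1)) * y"
    using balanced_parameters_exist[OF assms] by blast
  have "other_colour Red = Blue" by (simp add: other_colour_def)
  then obtain FR FB where FR: "Kk_factor k (q * k) FR" and FB: "Kk_factor k (q * k) FB"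
    and red_eq_blue: "colour_count (q * k - y) Red FR Red = colour_count (q * k - y) Red FB Blue"
    and maximal: "\<And>F d. Kk_factor k (q * k) F \<Longrightarrow>
      colour_count (q * k - y) Red F d \<le> colour_count (q * k - y) Red FB Blue"
    using equal_colour_maxima[OF \<open>0 < k\<close> b y balance, of Red] by metis
  have "lambda_k k * real (q * k) \<le> real (colour_count (q * k - y) Red FB Blue)"
    using \<open>0 < k\<close> \<open>0 < q\<close> by (intro lambda_k_mult_le[OF _ _ _ _ maximal]) simp_all
  then show ?thesis
    using FR FB red_eq_blue \<open>0 < k\<close> \<open>0 < q\<close> by (intro exI[of _ "q * k"] exI[of _ "q * k - y"] exI[of _ Red]) auto
qed

end
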